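(* Let $\rho : G \to \mathrm{O}(V)$ be an orthogonal representation of a compact Lie group $G$ on a finite dimensional real Euclidean vector space $(V,\langle\cdot\mid\cdot\rangle)$ with $V^G=\{0\}$. Let $\sigma_1,\ldots,\sigma_n$ be homogeneous generators of $\mathbb{R}[V]^G$ of positive degrees $d_1,\ldots,d_n$, with $\sigma_1(v)=\langle v\mid v\rangle$, and let $\sigma=(\sigma_1,\ldots,\sigma_n)$. Let $\mathcal{C}$ be a class of $C^\infty$-functions as in the context, let $U \subseteq \mathbb{R}^q$ be an open neighborhood of $0$, and let $f=(f_1,\ldots,f_n) : U \to \sigma(V) \subseteq \mathbb{R}^n$ be a $\mathcal{C}$-mapping. Assume that $f_1$ is not identically zero and that, for every $j$ with $f_j$ not identically zero, $f_j(x) = x^{\alpha_j} g_j(x)$ on $U$ for some non-vanishing $g_j \in \mathcal{C}(U,\mathbb{R})$ and some $\alpha_j \in \mathbb{N}^q$. Then there exists $\delta \in \mathbb{N}^q$ such that $\alpha_1 = 2\delta$ and $\alpha_j \ge d_j\delta$ (componentwise) for all $j$ with $f_j$ not identically zero.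
   Context: The class $\mathcal{C}$: for every open $U \subseteq \mathbb{R}^q$ ($q\in\mathbb{N}$) a subalgebra $\mathcal{C}(U)\subseteq C^\infty(U,\mathbb{R})$ containing the real analytic functions and closed under composition, partial derivatives, division by a coordinate (a function vanishing on $\{x_i=a_i\}$ equals $(x_i-a_i)h$ with $h\in\mathcal{C}$), and taking local inverses of mappings with invertible Jacobian, and quasianalytic (a function with vanishing Taylor series at a point vanishes near that point). For $x\in\mathbb{R}^q$, $\alpha\in\mathbb{N}^q$, $x^\alpha = x_1^{\alpha_1}\cdots x_q^{\alpha_q}$. *)

theory Defs
  imports "HOL-Analysis.Analysis" "HOL-Algebra.Group"
begin

definition Rq :: "nat \<Rightarrow> (nat \<Rightarrow> real) set" where
  "Rq q = {x. \<forall>i\<ge>q. x i = 0}"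

text \<open>Open subsets of R^q (sup-norm balls, i.e. the Euclidean topology).\<close>
definition open_q :: "nat \<Rightarrow> (nat \<Rightarrow> real) set \<Rightarrow> bool" where
  "open_q q U \<longleftrightarrow> U \<subseteq> Rq q \<and>
     (\<forall>x\<in>U. \<exists>e>0. \<forall>y\<in>Rq q. (\<forall>i<q. \<bar>y i - x i\<bar> < e) \<longrightarrow> y \<in> U)"

definition cont_q :: "nat \<Rightarrow> (nat \<Rightarrow> real) set \<Rightarrow> ((nat \<Rightarrow> real) \<Rightarrow> real) \<Rightarrow> bool" where
  "cont_q q U h \<longleftrightarrow> (\<forall>x\<in>U. \<forall>e>0. \<exists>r>0. \<forall>y\<in>U.
      (\<forall>i<q. \<bar>y i - x i\<bar> < r) \<longrightarrow> \<bar>h y - h x\<bar> < e)"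

definition partial :: "nat \<Rightarrow> ((nat \<Rightarrow> real) \<Rightarrow> real) \<Rightarrow> (nat \<Rightarrow> real) \<Rightarrow> real" where
  "partial i h x = deriv (\<lambda>t. h (x(i := x i + t))) 0"

fun iter_partial :: "nat list \<Rightarrow> ((nat \<Rightarrow> real) \<Rightarrow> real) \<Rightarrow> (nat \<Rightarrow> real) \<Rightarrow> real" where
  "iter_partial [] h = h"
| "iter_partial (i # is) h = partial i (iter_partial is h)"

definition smooth_q :: "nat \<Rightarrow> (nat \<Rightarrow> real) set \<Rightarrow> ((nat \<Rightarrow> real) \<Rightarrow> real) \<Rightarrow> bool" where
  "smooth_q q U h \<longleftrightarrow> (\<forall>is. set is \<subseteq> {..<q} \<longrightarrow>
      cont_q q U (iter_partial is h) \<and>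
      (\<forall>i<q. \<forall>x\<in>U. (\<lambda>t. iter_partial is h (x(i := x i + t))) differentiable (at 0)))"

definition MI :: "nat \<Rightarrow> (nat \<Rightarrow> nat) set" where
  "MI q = {\<alpha>. \<forall>i\<ge>q. \<alpha> i = 0}"

definition analytic_q :: "nat \<Rightarrow> (nat \<Rightarrow> real) set \<Rightarrow> ((nat \<Rightarrow> real) \<Rightarrow> real) \<Rightarrow> bool" where
  "analytic_q q U h \<longleftrightarrow> (\<forall>a\<in>U. \<exists>r>0. \<exists>c :: (nat \<Rightarrow> nat) \<Rightarrow> real. \<forall>x\<in>U.
      (\<forall>i<q. \<bar>x i - a i\<bar> < r) \<longrightarrow>
      ((\<lambda>\<alpha>. c \<alpha> * (\<Prod>i<q. (x i - a i) ^ \<alpha> i)) has_sum h x) (MI q))"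

definition tuple :: "nat \<Rightarrow> (nat \<Rightarrow> (nat \<Rightarrow> real) \<Rightarrow> real) \<Rightarrow> (nat \<Rightarrow> real) \<Rightarrow> (nat \<Rightarrow> real)" where
  "tuple p \<phi> x = (\<lambda>k. if k < p then \<phi> k x else 0)"

text \<open>The class C: Cls q U is the set of C-functions on the open set U of R^q
  (functions are total, only their values on U matter).\<close>
definition C_class :: "(nat \<Rightarrow> (nat \<Rightarrow> real) set \<Rightarrow> ((nat \<Rightarrow> real) \<Rightarrow> real) set) \<Rightarrow> bool" where
  "C_class Cls \<longleftrightarrow>
    (\<forall>q U. open_q q U \<longrightarrow>
      \<comment> \<open>functions on U: membership only depends on the values on U\<close>
      (\<forall>h h'. h \<in> Cls q U \<and> (\<forall>x\<in>U. h x = h' x) \<longrightarrow> h' \<in> Cls q U) \<and>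
      \<comment> \<open>subalgebra of C^infinity(U)\<close>
      (\<forall>h\<in>Cls q U. smooth_q q U h) \<and>
      (\<forall>h\<in>Cls q U. \<forall>k\<in>Cls q U. (\<lambda>x. h x + k x) \<in> Cls q U \<and> (\<lambda>x. h x * k x) \<in> Cls q U) \<and>
      (\<forall>c. (\<lambda>x. c) \<in> Cls q U) \<and>
      \<comment> \<open>contains the real analytic functions\<close>
      (\<forall>h. analytic_q q U h \<longrightarrow> h \<in> Cls q U) \<and>
      \<comment> \<open>closed under partial derivatives\<close>
      (\<forall>h\<in>Cls q U. \<forall>i<q. partial i h \<in> Cls q U) \<and>
      \<comment> \<open>division by a coordinate\<close>
      (\<forall>h\<in>Cls q U. \<forall>i<q. \<forall>a::real. (\<forall>x\<in>U. x i = a \<longrightarrow> h x = 0) \<longrightarrow>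
          (\<exists>k\<in>Cls q U. \<forall>x\<in>U. h x = (x i - a) * k x)) \<and>
      \<comment> \<open>quasianalyticity\<close>
      (\<forall>h\<in>Cls q U. \<forall>a\<in>U. (\<forall>is. set is \<subseteq> {..<q} \<longrightarrow> iter_partial is h a = 0) \<longrightarrow>
          (\<exists>e>0. \<forall>x\<in>U. (\<forall>i<q. \<bar>x i - a i\<bar> < e) \<longrightarrow> h x = 0)) \<and>
      \<comment> \<open>local inverses of mappings with invertible Jacobian\<close>
      (\<forall>\<phi> a. (\<forall>k<q. \<phi> k \<in> Cls q U) \<and> a \<in> U \<and>
          (\<forall>w\<in>Rq q. (\<forall>k<q. (\<Sum>i<q. partial i (\<phi> k) a * w i) = 0) \<longrightarrow> w = (\<lambda>_. 0)) \<longrightarrow>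
          (\<exists>U0 V0 \<psi>. open_q q U0 \<and> a \<in> U0 \<and> U0 \<subseteq> U \<and> open_q q V0 \<and>
             tuple q \<phi> ` U0 = V0 \<and> (\<forall>k<q. \<psi> k \<in> Cls q V0) \<and> tuple q \<psi> ` V0 = U0 \<and>
             (\<forall>x\<in>U0. tuple q \<psi> (tuple q \<phi> x) = x) \<and>
             (\<forall>y\<in>V0. tuple q \<phi> (tuple q \<psi> y) = y))) \<and>
      \<comment> \<open>closed under composition\<close>
      (\<forall>p W h \<phi>. open_q p W \<and> h \<in> Cls p W \<and> (\<forall>k<p. \<phi> k \<in> Cls q U) \<and>
          (\<forall>x\<in>U. tuple p \<phi> x \<in> W) \<longrightarrow> (\<lambda>x. h (tuple p \<phi> x)) \<in> Cls q U))"

definition monom_V :: "('v::finite \<Rightarrow> nat) \<Rightarrow> real^'v \<Rightarrow> real" where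
  "monom_V \<alpha> v = (\<Prod>i\<in>UNIV. (v $ i) ^ \<alpha> i)"

definition polyfun_V :: "(real^'v::finite \<Rightarrow> real) \<Rightarrow> bool" where
  "polyfun_V p \<longleftrightarrow> (\<exists>A c. finite A \<and> p = (\<lambda>v. \<Sum>\<alpha>\<in>A. c \<alpha> * monom_V \<alpha> v))"

definition homog_polyfun_V :: "nat \<Rightarrow> (real^'v::finite \<Rightarrow> real) \<Rightarrow> bool" where
  "homog_polyfun_V k p \<longleftrightarrow> (\<exists>A c. finite A \<and> (\<forall>\<alpha>\<in>A. (\<Sum>i\<in>UNIV. \<alpha> i) = k) \<and>
      p = (\<lambda>v. \<Sum>\<alpha>\<in>A. c \<alpha> * monom_V \<alpha> v))"

definition inv_poly :: "('g, 'b) monoid_scheme \<Rightarrow> ('g \<Rightarrow> real^'v^'v) \<Rightarrow> (real^'v::finite \<Rightarrow> real) \<Rightarrow> bool" where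
  "inv_poly G \<rho> p \<longleftrightarrow> polyfun_V p \<and> (\<forall>g\<in>carrier G. \<forall>v. p (\<rho> g *v v) = p v)"

definition generates_inv :: "('g, 'b) monoid_scheme \<Rightarrow> ('g \<Rightarrow> real^'v^'v) \<Rightarrow> nat \<Rightarrow> (nat \<Rightarrow> real^'v::finite \<Rightarrow> real) \<Rightarrow> bool" where
  "generates_inv G \<rho> n \<sigma> \<longleftrightarrow> (\<forall>p. inv_poly G \<rho> p \<longrightarrow>
     (\<exists>A c. finite A \<and> p = (\<lambda>v. \<Sum>\<beta>\<in>A. c \<beta> * (\<Prod>j\<in>{1..n}. (\<sigma> j v) ^ \<beta> j))))"

end

theory Submission imports Defs begin

text \<open>Fix a coordinate \<open>i\<close> and restrict to the curve with \<open>t\<close> in slot \<open>i\<close> and a small fixed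
  \<open>s > 0\<close> in all other slots. Along it \<open>f j\<close> is a positive constant times \<open>t ^ \<alpha> j i\<close> times a
  function close to \<open>g j 0 \<noteq> 0\<close>. Since \<open>f 1 = \<sigma> 1 \<circ> v = |v|\<^sup>2 \<ge> 0\<close>, comparing \<open>t\<close> with \<open>-t\<close>
  shows that \<open>\<alpha> 1 i\<close> is even, say \<open>2 \<delta> i\<close>. Homogeneity of \<open>\<sigma> j\<close> gives \<open>(f j)\<^sup>2 \<le> K (f 1) ^ d j\<close>,
  i.e. \<open>t ^ (2 \<alpha> j i)\<close> is at most a constant times \<open>t ^ (2 \<delta> i d j)\<close> as \<open>t \<rightarrow> 0+\<close>, whence
  \<open>d j \<delta> i \<le> \<alpha> j i\<close>.\<close>

lemma homog_polyfun_V_bound: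
  fixes p :: "real^'v::finite \<Rightarrow> real"
  assumes "homog_polyfun_V k p"
  shows "\<exists>K\<ge>0. \<forall>v. \<bar>p v\<bar> \<le> K * norm v ^ k"
proof -
  obtain A c where A: "finite A" "\<forall>\<alpha>\<in>A. (\<Sum>i\<in>UNIV. \<alpha> i) = k"
    and p: "p = (\<lambda>v. \<Sum>\<alpha>\<in>A. c \<alpha> * monom_V \<alpha> v)"
    using assms unfolding homog_polyfun_V_def by blast
  have monom: "\<bar>monom_V \<alpha> v\<bar> \<le> norm v ^ k" if "\<alpha> \<in> A" for \<alpha> v
  proof -
    have "\<bar>monom_V \<alpha> v\<bar> = (\<Prod>i\<in>UNIV. \<bar>v $ i\<bar> ^ \<alpha> i)"
      unfolding monom_V_def by (simp add: abs_prod power_abs)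
    also have "\<dots> \<le> (\<Prod>i\<in>UNIV. norm v ^ \<alpha> i)"
      by (intro prod_mono conjI power_mono) (auto simp: component_le_norm_cart)
    also have "\<dots> = norm v ^ (\<Sum>i\<in>UNIV. \<alpha> i)" by (simp add: power_sum)
    finally show ?thesis using A that by simp
  qed
  have "\<bar>p v\<bar> \<le> (\<Sum>\<alpha>\<in>A. \<bar>c \<alpha>\<bar>) * norm v ^ k" for v
  proof -
    have "\<bar>p v\<bar> \<le> (\<Sum>\<alpha>\<in>A. \<bar>c \<alpha> * monom_V \<alpha> v\<bar>)" unfolding p by (rule sum_abs)
    also have "\<dots> \<le> (\<Sum>\<alpha>\<in>A. \<bar>c \<alpha>\<bar> * norm v ^ k)"
      by (intro sum_mono) (auto simp: abs_mult intro: mult_left_mono monom)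
    finally show ?thesis by (simp add: sum_distrib_right)
  qed
  then show ?thesis by (intro exI[of _ "\<Sum>\<alpha>\<in>A. \<bar>c \<alpha>\<bar>"]) auto
qed

lemma homog_polyfun_V_square_bound:
  fixes p :: "real^'v::finite \<Rightarrow> real"
  assumes "homog_polyfun_V k p"
  shows "\<exists>K\<ge>0. \<forall>v. (p v)\<^sup>2 \<le> K * (v \<bullet> v) ^ k"
proof -
  obtain K where K: "K \<ge> 0" "\<forall>v. \<bar>p v\<bar> \<le> K * norm v ^ k"
    using homog_polyfun_V_bound[OF assms] by blast
  have "(p v)\<^sup>2 \<le> K\<^sup>2 * (v \<bullet> v) ^ k" for v
  proof -
    have "\<bar>p v\<bar>\<^sup>2 \<le> (K * norm v ^ k)\<^sup>2"
      using K by (intro power_mono) auto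
    also have "\<dots> = K\<^sup>2 * (norm v ^ 2) ^ k"
      by (simp add: power_mult_distrib flip: power_mult) (simp add: mult.commute)
    finally show ?thesis by (simp add: power2_norm_eq_inner)
  qed
  then show ?thesis by (intro exI[of _ "K\<^sup>2"]) auto
qed

lemma exponent_le_if_power_bound_near_0:
  fixes c D \<epsilon> :: real
  assumes "\<epsilon> > 0" "c > 0" and bound: "\<And>t. 0 < t \<Longrightarrow> t < \<epsilon> \<Longrightarrow> c * t ^ a \<le> D * t ^ b"
  shows "b \<le> a"
proof (rule ccontr)
  assume "\<not> b \<le> a"
  then have b: "b = a + (b - a)" "b - a > 0" by auto
  have "\<forall>\<^sub>F t in at_right 0. c \<le> D * t ^ (b - a)"
  proof (rule eventually_at_rightI[of 0 \<epsilon>])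
    fix t :: real assume "t \<in> {0<..<\<epsilon>}"
    then have "t > 0" "c * t ^ a \<le> D * t ^ b" using bound by auto
    moreover have "t ^ b = t ^ (b - a) * t ^ a"
      using b(1) by (metis power_add mult.commute)
    ultimately show "c \<le> D * t ^ (b - a)"
      by (metis mult.assoc mult_right_le_imp_le zero_less_power)
  qed (use assms in auto)
  moreover have "((\<lambda>t. D * t ^ (b - a)) \<longlongrightarrow> D * 0 ^ (b - a)) (at_right 0)"
    by (intro tendsto_intros)
  ultimately have "c \<le> D * 0 ^ (b - a)"
    by (intro tendsto_lowerbound) auto
  then show False using b(2) assms(2) by (simp add: power_0_left)
qed

definition axis_point :: "nat \<Rightarrow> nat \<Rightarrow> real \<Rightarrow> real \<Rightarrow> nat \<Rightarrow> real" where
  "axis_point q i t s = (\<lambda>k. if k < q then if k = i then t else s else 0)"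

lemma axis_point_in_Rq: "axis_point q i t s \<in> Rq q"
  by (simp add: axis_point_def Rq_def)

lemma axis_point_small:
  "\<bar>t\<bar> < r \<Longrightarrow> \<bar>s\<bar> < r \<Longrightarrow> \<forall>k<q. \<bar>axis_point q i t s k\<bar> < r"
  by (simp add: axis_point_def)

lemma prod_power_axis_point:
  assumes "i < q"
  shows "(\<Prod>k<q. axis_point q i t s k ^ a k) = t ^ a i * (\<Prod>k\<in>{..<q}-{i}. s ^ a k)"
proof -
  have "(\<Prod>k<q. axis_point q i t s k ^ a k)
      = axis_point q i t s i ^ a i * (\<Prod>k\<in>{..<q}-{i}. axis_point q i t s k ^ a k)"
    using assms by (subst prod.remove[of _ i]) auto
  also have "\<dots> = t ^ a i * (\<Prod>k\<in>{..<q}-{i}. s ^ a k)"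
    using assms by (auto simp: axis_point_def intro!: prod.cong)
  finally show ?thesis .
qed

lemma C_class_imp_cont_q:
  assumes "C_class Cls" "open_q q U" "h \<in> Cls q U"
  shows "cont_q q U h"
proof -
  have "\<forall>h\<in>Cls q U. smooth_q q U h"
    using assms(1)[unfolded C_class_def, THEN spec, THEN spec, THEN mp, OF assms(2)] by (elim conjE)
  then have "smooth_q q U h" using assms(3) ..
  then have "cont_q q U (iter_partial [] h)" unfolding smooth_q_def by (metis empty_set empty_subsetI)
  then show ?thesis by simp
qed

lemma cont_q_nonzero_near_origin:
  assumes "open_q q U" "(\<lambda>_. 0) \<in> U" "cont_q q U g" "g (\<lambda>_. 0) \<noteq> 0"
  shows "\<exists>r>0. \<forall>y\<in>Rq q. (\<forall>k<q. \<bar>y k\<bar> < r) \<longrightarrow>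
            y \<in> U \<and> \<bar>g y - g (\<lambda>_. 0)\<bar> < \<bar>g (\<lambda>_. 0)\<bar> / 2"
proof -
  obtain e where e: "e > 0" "\<forall>y\<in>Rq q. (\<forall>k<q. \<bar>y k\<bar> < e) \<longrightarrow> y \<in> U"
    using assms(1,2) unfolding open_q_def by fastforce
  obtain r where r: "r > 0"
    "\<forall>y\<in>U. (\<forall>k<q. \<bar>y k\<bar> < r) \<longrightarrow> \<bar>g y - g (\<lambda>_. 0)\<bar> < \<bar>g (\<lambda>_. 0)\<bar> / 2"
    using assms(2-4) unfolding cont_q_def by (metis diff_zero half_gt_zero zero_less_abs_iff)
  show ?thesis
    using e r by (intro exI[of _ "min e r"]) auto
qed

lemma even_exponent_if_monomial_factor_nonneg:
  assumes U: "open_q q U" "(\<lambda>_. 0) \<in> U" and g: "cont_q q U g" "g (\<lambda>_. 0) \<noteq> 0"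
    and nonneg: "\<forall>x\<in>U. 0 \<le> (\<Prod>k<q. x k ^ \<alpha> k) * g x"
    and i: "i < q"
  shows "even (\<alpha> i)"
proof (rule ccontr)
  assume odd: "odd (\<alpha> i)"
  obtain r where r: "r > 0" "\<forall>y\<in>Rq q. (\<forall>k<q. \<bar>y k\<bar> < r) \<longrightarrow>
      y \<in> U \<and> \<bar>g y - g (\<lambda>_. 0)\<bar> < \<bar>g (\<lambda>_. 0)\<bar> / 2"
    using cont_q_nonzero_near_origin[OF U g] by blast
  define s where "s = r / 2"
  define S where "S = (\<Prod>k\<in>{..<q}-{i}. s ^ \<alpha> k)"
  have s: "s > 0" "\<bar>s\<bar> < r" "\<bar>-s\<bar> < r" and S: "S > 0"
    using r(1) by (auto simp: s_def S_def intro: prod_pos)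
  define y\<^sub>p y\<^sub>m where "y\<^sub>p = axis_point q i s s" and "y\<^sub>m = axis_point q i (-s) s"
  have near: "y \<in> U \<and> \<bar>g y - g (\<lambda>_. 0)\<bar> < \<bar>g (\<lambda>_. 0)\<bar> / 2" if "y \<in> {y\<^sub>p, y\<^sub>m}" for y
    using that r(2) axis_point_in_Rq axis_point_small[OF s(2,2)] axis_point_small[OF s(3,2)]
    unfolding y\<^sub>p_def y\<^sub>m_def by blast
  have "0 \<le> (\<Prod>k<q. y\<^sub>p k ^ \<alpha> k) * g y\<^sub>p" "0 \<le> (\<Prod>k<q. y\<^sub>m k ^ \<alpha> k) * g y\<^sub>m"
    using nonneg near by auto
  then have "0 \<le> s ^ \<alpha> i * S * g y\<^sub>p" "0 \<le> (-s) ^ \<alpha> i * S * g y\<^sub>m"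
    by (simp_all only: y\<^sub>p_def y\<^sub>m_def S_def prod_power_axis_point[OF i])
  then have "0 \<le> s ^ \<alpha> i * S * g y\<^sub>p" "0 \<le> - (s ^ \<alpha> i * S * g y\<^sub>m)"
    using odd by (simp_all add: power_minus_odd)
  moreover have "0 < s ^ \<alpha> i * S" using s(1) S by simp
  ultimately have "0 \<le> g y\<^sub>p" "g y\<^sub>m \<le> 0"
    using mult_pos_neg[of "s ^ \<alpha> i * S" "g y\<^sub>p"] mult_pos_pos[of "s ^ \<alpha> i * S" "g y\<^sub>m"] by linarith+
  moreover have "\<bar>g y\<^sub>p - g (\<lambda>_. 0)\<bar> < \<bar>g (\<lambda>_. 0)\<bar> / 2" "\<bar>g y\<^sub>m - g (\<lambda>_. 0)\<bar> < \<bar>g (\<lambda>_. 0)\<bar> / 2"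
    using near by blast+
  ultimately show False by linarith
qed

lemma exponent_le_if_monomial_factor_power_bound:
  fixes K :: real
  assumes U: "open_q q U" "(\<lambda>_. 0) \<in> U"
    and g1: "cont_q q U g\<^sub>1" "g\<^sub>1 (\<lambda>_. 0) \<noteq> 0"
    and g2: "cont_q q U g\<^sub>2" "g\<^sub>2 (\<lambda>_. 0) \<noteq> 0"
    and bound: "\<forall>x\<in>U. \<bar>(\<Prod>k<q. x k ^ \<alpha>\<^sub>2 k) * g\<^sub>2 x\<bar> ^ a \<le> K * \<bar>(\<Prod>k<q. x k ^ \<alpha>\<^sub>1 k) * g\<^sub>1 x\<bar> ^ b"
    and K: "K \<ge> 0" and i: "i < q"
  shows "b * \<alpha>\<^sub>1 i \<le> a * \<alpha>\<^sub>2 i"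
proof -
  obtain r\<^sub>1 where r1: "r\<^sub>1 > 0" "\<forall>y\<in>Rq q. (\<forall>k<q. \<bar>y k\<bar> < r\<^sub>1) \<longrightarrow>
      y \<in> U \<and> \<bar>g\<^sub>1 y - g\<^sub>1 (\<lambda>_. 0)\<bar> < \<bar>g\<^sub>1 (\<lambda>_. 0)\<bar> / 2"
    using cont_q_nonzero_near_origin[OF U g1] by blast
  obtain r\<^sub>2 where r2: "r\<^sub>2 > 0" "\<forall>y\<in>Rq q. (\<forall>k<q. \<bar>y k\<bar> < r\<^sub>2) \<longrightarrow>
      y \<in> U \<and> \<bar>g\<^sub>2 y - g\<^sub>2 (\<lambda>_. 0)\<bar> < \<bar>g\<^sub>2 (\<lambda>_. 0)\<bar> / 2"
    using cont_q_nonzero_near_origin[OF U g2] by blast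
  define \<epsilon> where "\<epsilon> = min r\<^sub>1 r\<^sub>2"
  define s where "s = \<epsilon> / 2"
  define S\<^sub>1 where "S\<^sub>1 = (\<Prod>k\<in>{..<q}-{i}. s ^ \<alpha>\<^sub>1 k)"
  define S\<^sub>2 where "S\<^sub>2 = (\<Prod>k\<in>{..<q}-{i}. s ^ \<alpha>\<^sub>2 k)"
  define M\<^sub>1 where "M\<^sub>1 = 3 * \<bar>g\<^sub>1 (\<lambda>_. 0)\<bar> / 2"
  define m\<^sub>2 where "m\<^sub>2 = \<bar>g\<^sub>2 (\<lambda>_. 0)\<bar> / 2"
  have \<epsilon>: "\<epsilon> > 0" and s: "s > 0" "s < \<epsilon>" and S: "S\<^sub>1 > 0" "S\<^sub>2 > 0" and m2: "m\<^sub>2 > 0"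
    using r1(1) r2(1) g2(2) by (auto simp: \<epsilon>_def s_def S\<^sub>1_def S\<^sub>2_def m\<^sub>2_def intro: prod_pos)
  have "(S\<^sub>2 * m\<^sub>2) ^ a * t ^ (a * \<alpha>\<^sub>2 i) \<le> (K * (S\<^sub>1 * M\<^sub>1) ^ b) * t ^ (b * \<alpha>\<^sub>1 i)"
    if t: "0 < t" "t < \<epsilon>" for t
  proof -
    define y where "y = axis_point q i t s"
    have "y \<in> Rq q" "\<forall>k<q. \<bar>y k\<bar> < r\<^sub>1" "\<forall>k<q. \<bar>y k\<bar> < r\<^sub>2"
      using axis_point_in_Rq axis_point_small[of t _ s q i] t s by (auto simp: y_def \<epsilon>_def)
    then have "y \<in> U" "\<bar>g\<^sub>1 y - g\<^sub>1 (\<lambda>_. 0)\<bar> < \<bar>g\<^sub>1 (\<lambda>_. 0)\<bar> / 2"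
        "\<bar>g\<^sub>2 y - g\<^sub>2 (\<lambda>_. 0)\<bar> < \<bar>g\<^sub>2 (\<lambda>_. 0)\<bar> / 2"
      using r1(2) r2(2) by blast+
    then have y: "y \<in> U" "m\<^sub>2 \<le> \<bar>g\<^sub>2 y\<bar>" "\<bar>g\<^sub>1 y\<bar> \<le> M\<^sub>1"
      unfolding m\<^sub>2_def M\<^sub>1_def by linarith+
    have h1: "\<bar>(\<Prod>k<q. y k ^ \<alpha>\<^sub>1 k) * g\<^sub>1 y\<bar> = t ^ \<alpha>\<^sub>1 i * S\<^sub>1 * \<bar>g\<^sub>1 y\<bar>"
     and h2: "\<bar>(\<Prod>k<q. y k ^ \<alpha>\<^sub>2 k) * g\<^sub>2 y\<bar> = t ^ \<alpha>\<^sub>2 i * S\<^sub>2 * \<bar>g\<^sub>2 y\<bar>"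
      using prod_power_axis_point[OF i] t S
      by (simp_all add: y_def S\<^sub>1_def S\<^sub>2_def abs_mult)
    have "(S\<^sub>2 * m\<^sub>2) ^ a * t ^ (a * \<alpha>\<^sub>2 i) = (t ^ \<alpha>\<^sub>2 i * S\<^sub>2 * m\<^sub>2) ^ a"
      by (simp add: power_mult_distrib power_mult[of t "\<alpha>\<^sub>2 i" a, symmetric] mult.commute)
    also have "\<dots> \<le> \<bar>(\<Prod>k<q. y k ^ \<alpha>\<^sub>2 k) * g\<^sub>2 y\<bar> ^ a"
      unfolding h2 using t S m2 y(2) by (intro power_mono mult_left_mono) auto
    also have "\<dots> \<le> K * \<bar>(\<Prod>k<q. y k ^ \<alpha>\<^sub>1 k) * g\<^sub>1 y\<bar> ^ b"
      using bound y(1) by blast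
    also have "\<dots> \<le> K * (t ^ \<alpha>\<^sub>1 i * S\<^sub>1 * M\<^sub>1) ^ b"
      unfolding h1 using K t S y(3) by (intro mult_left_mono power_mono) auto
    also have "\<dots> = (K * (S\<^sub>1 * M\<^sub>1) ^ b) * t ^ (b * \<alpha>\<^sub>1 i)"
      by (simp add: power_mult_distrib power_mult[of t "\<alpha>\<^sub>1 i" b, symmetric] mult.commute)
    finally show ?thesis .
  qed
  then show ?thesis
    using exponent_le_if_power_bound_near_0[OF \<epsilon>, of "(S\<^sub>2 * m\<^sub>2) ^ a"] S m2 by auto
qed

theorem lemma5p3:
  fixes G :: "('g, 'b) monoid_scheme"
    and \<rho> :: "'g \<Rightarrow> real^'v::finite^'v"
    and n :: nat
    and \<sigma> :: "nat \<Rightarrow> real^'v \<Rightarrow> real"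
    and d :: "nat \<Rightarrow> nat"
    and Cls :: "nat \<Rightarrow> (nat \<Rightarrow> real) set \<Rightarrow> ((nat \<Rightarrow> real) \<Rightarrow> real) set"
    and q :: nat
    and U :: "(nat \<Rightarrow> real) set"
    and f g :: "nat \<Rightarrow> (nat \<Rightarrow> real) \<Rightarrow> real"
    and \<alpha> :: "nat \<Rightarrow> nat \<Rightarrow> nat"
  assumes grp: "group G"
    and hom: "\<forall>x\<in>carrier G. \<forall>y\<in>carrier G. \<rho> (x \<otimes>\<^bsub>G\<^esub> y) = \<rho> x ** \<rho> y"
    and orth: "\<forall>x\<in>carrier G. orthogonal_matrix (\<rho> x)"
    and cpt: "compact (\<rho> ` carrier G)"
    and fix0: "{v. \<forall>x\<in>carrier G. \<rho> x *v v = v} = {0}"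
    and n1: "1 \<le> n"
    and gens_inv: "\<forall>j\<in>{1..n}. inv_poly G \<rho> (\<sigma> j)"
    and gens_hom: "\<forall>j\<in>{1..n}. 0 < d j \<and> homog_polyfun_V (d j) (\<sigma> j)"
    and gens: "generates_inv G \<rho> n \<sigma>"
    and sigma1: "\<forall>v. \<sigma> 1 v = v \<bullet> v"
    and C: "C_class Cls"
    and U: "open_q q U" "(\<lambda>_. 0) \<in> U"
    and fC: "\<forall>j\<in>{1..n}. f j \<in> Cls q U"
    and fimg: "\<forall>x\<in>U. \<exists>v. \<forall>j\<in>{1..n}. f j x = \<sigma> j v"
    and f1: "\<exists>x\<in>U. f 1 x \<noteq> 0"
    and fnormal: "\<forall>j\<in>{1..n}. (\<exists>x\<in>U. f j x \<noteq> 0) \<longrightarrow>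
        g j \<in> Cls q U \<and> (\<forall>x\<in>U. g j x \<noteq> 0) \<and>
        (\<forall>x\<in>U. f j x = (\<Prod>i<q. (x i) ^ \<alpha> j i) * g j x)"
  shows "\<exists>\<delta> :: nat \<Rightarrow> nat. (\<forall>i<q. \<alpha> 1 i = 2 * \<delta> i) \<and>
     (\<forall>j\<in>{1..n}. (\<exists>x\<in>U. f j x \<noteq> 0) \<longrightarrow> (\<forall>i<q. d j * \<delta> i \<le> \<alpha> j i))"
proof -
  have one: "1 \<in> {1..n}" using n1 by simp
  have factor: "cont_q q U (g j)" "g j (\<lambda>_. 0) \<noteq> 0" "\<forall>x\<in>U. f j x = (\<Prod>k<q. x k ^ \<alpha> j k) * g j x"
    if "j \<in> {1..n}" "\<exists>x\<in>U. f j x \<noteq> 0" for j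
  proof -
    have "g j \<in> Cls q U \<and> (\<forall>x\<in>U. g j x \<noteq> 0) \<and> (\<forall>x\<in>U. f j x = (\<Prod>k<q. x k ^ \<alpha> j k) * g j x)"
      using fnormal that by blast
    then show "cont_q q U (g j)" "g j (\<lambda>_. 0) \<noteq> 0" "\<forall>x\<in>U. f j x = (\<Prod>k<q. x k ^ \<alpha> j k) * g j x"
      using C_class_imp_cont_q[OF C U(1)] U(2) by simp_all
  qed
  have f_eq_\<sigma>: "\<exists>v. f 1 x = v \<bullet> v \<and> f j x = \<sigma> j v" if x: "x \<in> U" and j: "j \<in> {1..n}" for x j
  proof -
    obtain v where "\<forall>j\<in>{1..n}. f j x = \<sigma> j v" using bspec[OF fimg x] ..
    then show ?thesis using one j sigma1 by auto
  qed
  have f1_nonneg: "\<forall>x\<in>U. 0 \<le> f 1 x"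
    using f_eq_\<sigma>[OF _ one] by fastforce
  define \<delta> where "\<delta> i = \<alpha> 1 i div 2" for i
  have \<alpha>1: "\<forall>i<q. \<alpha> 1 i = 2 * \<delta> i"
    using even_exponent_if_monomial_factor_nonneg[OF U factor(1,2)[OF one f1]] f1_nonneg factor(3)[OF one f1]
    by (simp add: \<delta>_def)
  moreover have "d j * \<delta> i \<le> \<alpha> j i" if j: "j \<in> {1..n}" "\<exists>x\<in>U. f j x \<noteq> 0" and i: "i < q" for j i
  proof -
    obtain K where K: "K \<ge> 0" "\<forall>v. (\<sigma> j v)\<^sup>2 \<le> K * (v \<bullet> v) ^ d j"
      using homog_polyfun_V_square_bound gens_hom j(1) by blast
    have "\<forall>x\<in>U. (f j x)\<^sup>2 \<le> K * (f 1 x) ^ d j"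
      using f_eq_\<sigma> j(1) K(2) by metis
    then have "\<forall>x\<in>U. \<bar>(\<Prod>k<q. x k ^ \<alpha> j k) * g j x\<bar> ^ 2 \<le> K * \<bar>(\<Prod>k<q. x k ^ \<alpha> 1 k) * g 1 x\<bar> ^ d j"
      using f1_nonneg factor(3)[OF one f1] factor(3)[OF j] by simp
    then have "d j * \<alpha> 1 i \<le> 2 * \<alpha> j i"
      by (rule exponent_le_if_monomial_factor_power_bound[OF U factor(1,2)[OF one f1] factor(1,2)[OF j] _ K(1) i])
    then show ?thesis using \<alpha>1 i by simp
  qed
  ultimately show ?thesis by (intro exI[of _ \<delta>]) blast
qed

end
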